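(* Let $G=(V,E)$ be a task-assistance graph and let $\pi=\langle v_0,\dots,v_k\rangle$ ($k\ge 1$) be a path in $G$ that admits at least one timing profile. Then there exists an optimal timing profile $\mathcal{T}=\langle t_0,\dots,t_{k-1}\rangle$ for $\pi$ such that $t_i\in C_i$ for every $i\in\{0,\dots,k-1\}$.
   Context: A task-assistance graph is a directed graph $G=(V,E)$ in which every edge $e$ has a length $\ell(e)\ge 0$ and every vertex $v$ has a finite set $\mathcal{I}(v)$ of closed intervals contained in $[0,1]$. A path is $\pi=\langle v_0,\dots,v_k\rangle$ with $(v_i,v_{i+1})\in E$; vertices may repeat, and all quantities below are attached to positions $i$ in the path. Set $\ell(v_{-1},v_0):=0$, $\ell(v_k,v_{k+1}):=0$, $\ell(v_i):=\sum_{j=0}^{i-1}\ell(v_j,v_{j+1})$, $\ell^+(v_i):=\ell(v_i)+\tfrac12\ell(v_i,v_{i+1})$, $\ell^-(v_i):=\ell(v_i)-\tfrac12\ell(v_{i-1},v_i)$, and $\ell^+(v_i,v_j):=\ell^+(v_j)-\ell^+(v_i)$ (for any positions $i,j$). A timing profile of $\pi$ is a sequence of reals $\langle t_0,\dots,t_{k-1}\rangle$ with $t_0\ge \ell^+(v_0)$, $t_{i+1}\ge t_i+\ell^+(v_i,v_{i+1})$ for $0\le i\le k-2$, and $t_{k-1}+\ell^+(v_{k-1},v_k)\le 1$. For a vertex $u$ and $0\le t\le t'\le 1$, $R(u,t,t'):=\sum_{I\in\mathcal{I}(u)}|[t,t']\cap I|$ (length of intersection). With $t_{-1}:=0$, $t_k:=1$,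 the reward of a timing profile is $R(\pi,\mathcal{T}):=\sum_{i=0}^{k}R(v_i,t_{i-1},t_i)$; a timing profile is optimal if it maximizes this reward over all timing profiles of $\pi$. Critical times: define augmented interval sets per position, $J_i:=\mathcal{I}(v_i)$ for $0<i<k$, $J_0:=\mathcal{I}(v_0)\cup\{[\ell^+(v_0),\ell^+(v_0)]\}$, $J_k:=\mathcal{I}(v_k)\cup\{[1-\ell^+(v_{k-1},v_k),\,1-\ell^+(v_{k-1},v_k)]\}$. For positions $0\le a<b\le k$ let $C(a,b):=\{t_e:[t_s,t_e]\in J_a\}\cup\{t_s-(\ell^-(v_b)-\ell^+(v_a)):[t_s,t_e]\in J_b\}$. For each position $i$, $C_i:=\bigcup_{0\le a<b\le k}\{\tau+\ell^+(v_a,v_i):\tau\in C(a,b)\}$. *)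

theory Defs
  imports Main "HOL-Analysis.Analysis"
begin

text \<open>A closed interval [a,b] is represented by the pair (a,b) with
 0 \<le> a \<le> b \<le> 1. Edge lengths are a function len :: 'v \<Rightarrow> 'v \<Rightarrow> real.
 A path is a nonempty list p = [v_0,...,v_k], k = length p - 1; positions are nats.
 A timing profile is a function t :: nat \<Rightarrow> real of which only t 0, ..., t (k-1) matter.\<close>

definition task_assistance_graph ::
  "'v set \<Rightarrow> ('v \<times> 'v) set \<Rightarrow> ('v \<Rightarrow> 'v \<Rightarrow> real) \<Rightarrow> ('v \<Rightarrow> (real \<times> real) set) \<Rightarrow> bool" where
  "task_assistance_graph V E len Iv \<longleftrightarrow>
     E \<subseteq> V \<times> V \<and>
     (\<forall>(u,w)\<in>E. len u w \<ge> 0) \<and>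
     (\<forall>v\<in>V. finite (Iv v) \<and> (\<forall>(a,b)\<in>Iv v. 0 \<le> a \<and> a \<le> b \<and> b \<le> 1))"

definition is_path :: "'v set \<Rightarrow> ('v \<times> 'v) set \<Rightarrow> 'v list \<Rightarrow> bool" where
  "is_path V E p \<longleftrightarrow> p \<noteq> [] \<and> set p \<subseteq> V \<and>
     (\<forall>i. i + 1 < length p \<longrightarrow> (p ! i, p ! (i+1)) \<in> E)"

definition eright :: "('v \<Rightarrow> 'v \<Rightarrow> real) \<Rightarrow> 'v list \<Rightarrow> nat \<Rightarrow> real" where
  "eright len p i = (if i + 1 < length p then len (p ! i) (p ! (i+1)) else 0)"

definition eleft :: "('v \<Rightarrow> 'v \<Rightarrow> real) \<Rightarrow> 'v list \<Rightarrow> nat \<Rightarrow> real" where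
  "eleft len p i = (if 0 < i \<and> i < length p then len (p ! (i-1)) (p ! i) else 0)"

definition lpos :: "('v \<Rightarrow> 'v \<Rightarrow> real) \<Rightarrow> 'v list \<Rightarrow> nat \<Rightarrow> real" where
  "lpos len p i = (\<Sum>j<i. len (p ! j) (p ! (j+1)))"

definition lplus :: "('v \<Rightarrow> 'v \<Rightarrow> real) \<Rightarrow> 'v list \<Rightarrow> nat \<Rightarrow> real" where
  "lplus len p i = lpos len p i + eright len p i / 2"

definition lminus :: "('v \<Rightarrow> 'v \<Rightarrow> real) \<Rightarrow> 'v list \<Rightarrow> nat \<Rightarrow> real" where
  "lminus len p i = lpos len p i - eleft len p i / 2"

definition lplus2 :: "('v \<Rightarrow> 'v \<Rightarrow> real) \<Rightarrow> 'v list \<Rightarrow> nat \<Rightarrow> nat \<Rightarrow> real" where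
  "lplus2 len p i j = lplus len p j - lplus len p i"

definition timing_profile :: "('v \<Rightarrow> 'v \<Rightarrow> real) \<Rightarrow> 'v list \<Rightarrow> (nat \<Rightarrow> real) \<Rightarrow> bool" where
  "timing_profile len p t \<longleftrightarrow>
     (let k = length p - 1 in
       t 0 \<ge> lplus len p 0 \<and>
       (\<forall>i. i + 1 \<le> k - 1 \<longrightarrow> t (i+1) \<ge> t i + lplus2 len p i (i+1)) \<and>
       t (k-1) + lplus2 len p (k-1) k \<le> 1)"

definition overlap :: "real \<Rightarrow> real \<Rightarrow> real \<times> real \<Rightarrow> real" where
  "overlap t t' I = max 0 (min t' (snd I) - max t (fst I))"

definition Rv :: "('v \<Rightarrow> (real \<times> real) set) \<Rightarrow> 'v \<Rightarrow> real \<Rightarrow> real \<Rightarrow> real" where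
  "Rv Iv u t t' = (\<Sum>I\<in>Iv u. overlap t t' I)"

text \<open>extended times: t_{-1} = 0 (represented as tprev at position 0), t_k = 1\<close>
definition reward :: "('v \<Rightarrow> (real \<times> real) set) \<Rightarrow> 'v list \<Rightarrow> (nat \<Rightarrow> real) \<Rightarrow> real" where
  "reward Iv p t =
     (let k = length p - 1 in
       \<Sum>i\<in>{0..k}. Rv Iv (p ! i) (if i = 0 then 0 else t (i-1)) (if i = k then 1 else t i))"

definition optimal_profile ::
  "('v \<Rightarrow> 'v \<Rightarrow> real) \<Rightarrow> ('v \<Rightarrow> (real \<times> real) set) \<Rightarrow> 'v list \<Rightarrow> (nat \<Rightarrow> real) \<Rightarrow> bool" where
  "optimal_profile len Iv p t \<longleftrightarrow> timing_profile len p t \<and>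
     (\<forall>t'. timing_profile len p t' \<longrightarrow> reward Iv p t' \<le> reward Iv p t)"

definition Jset :: "('v \<Rightarrow> 'v \<Rightarrow> real) \<Rightarrow> ('v \<Rightarrow> (real \<times> real) set) \<Rightarrow> 'v list \<Rightarrow> nat \<Rightarrow> (real \<times> real) set" where
  "Jset len Iv p i =
     (let k = length p - 1 in
       Iv (p ! i)
       \<union> (if i = 0 then {(lplus len p 0, lplus len p 0)} else {})
       \<union> (if i = k then {(1 - lplus2 len p (k-1) k, 1 - lplus2 len p (k-1) k)} else {}))"

definition Cab :: "('v \<Rightarrow> 'v \<Rightarrow> real) \<Rightarrow> ('v \<Rightarrow> (real \<times> real) set) \<Rightarrow> 'v list \<Rightarrow> nat \<Rightarrow> nat \<Rightarrow> real set" where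
  "Cab len Iv p a b =
     {te. \<exists>ts. (ts, te) \<in> Jset len Iv p a}
     \<union> {ts - (lminus len p b - lplus len p a) | ts te. (ts, te) \<in> Jset len Iv p b}"

definition critical_times :: "('v \<Rightarrow> 'v \<Rightarrow> real) \<Rightarrow> ('v \<Rightarrow> (real \<times> real) set) \<Rightarrow> 'v list \<Rightarrow> nat \<Rightarrow> real set" where
  "critical_times len Iv p i =
     (\<Union>a\<in>{0..length p - 1}. \<Union>b\<in>{0..length p - 1}.
        if a < b then (\<lambda>\<tau>. \<tau> + lplus2 len p a i) ` Cab len Iv p a b else {})"

end

theory Submission
  imports Defs
begin

(* Measure each departure time by its slack s_j = t_j - lplus j. Feasibility becomes
   0 <= s_0 <= ... <= s_(k-1) <= 1 - lplus k, and t_i lies in C_i exactly when s_i lies in a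
   finite set of critical slacks that does not depend on i.
   If some slack value sigma is not critical, shift all positions with slack sigma together to a
   common value y. Up to the neighbours lo < sigma < hi of sigma among the critical slacks and the
   slacks of t, the profile stays feasible, and each overlap length is the positive part of a
   function affine in y, because its kinks lie at critical slacks. Hence the reward is convex in
   y on [lo, hi], so one endpoint is at least as good, and it has one noncritical slack value
   fewer. Iterating gives a critical profile at least as good as any given one, and as there
   are only finitely many critical profiles, the best of them is optimal. *)

definition affine_on :: "real set \<Rightarrow> (real \<Rightarrow> real) \<Rightarrow> bool" where
  "affine_on S h \<longleftrightarrow> (\<exists>\<alpha> \<beta>. \<forall>y\<in>S. h y = \<alpha> + \<beta> * y)"

lemma affine_on_const: "affine_on S (\<lambda>y. c)"
  unfolding affine_on_def by (intro exI[of _ c] exI[of _ 0]) simp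

lemma affine_on_shift: "affine_on S (\<lambda>y. y + r)"
  unfolding affine_on_def by (intro exI[of _ r] exI[of _ 1]) simp

lemma affine_on_diff:
  assumes "affine_on S f" "affine_on S g"
  shows "affine_on S (\<lambda>y. f y - g y)"
proof -
  obtain \<alpha>1 \<beta>1 \<alpha>2 \<beta>2 where "\<forall>y\<in>S. f y = \<alpha>1 + \<beta>1 * y" "\<forall>y\<in>S. g y = \<alpha>2 + \<beta>2 * y"
    using assms unfolding affine_on_def by blast
  then show ?thesis
    unfolding affine_on_def
    by (intro exI[of _ "\<alpha>1 - \<alpha>2"] exI[of _ "\<beta>1 - \<beta>2"]) (auto simp: algebra_simps)
qed

lemma affine_on_cong: "affine_on S f \<Longrightarrow> (\<And>y. y \<in> S \<Longrightarrow> f y = g y) \<Longrightarrow> affine_on S g"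
  unfolding affine_on_def by metis

lemma affine_on_min_shift:
  assumes "c - r \<notin> {lo<..<hi}"
  shows "affine_on {lo..hi} (\<lambda>y. min (y + r) c)"
proof (cases "c - r \<le> lo")
  case True
  then show ?thesis by (intro affine_on_cong[OF affine_on_const]) auto
next
  case False
  with assms have "hi \<le> c - r" by auto
  then show ?thesis by (intro affine_on_cong[OF affine_on_shift]) auto
qed

lemma affine_on_max_shift:
  assumes "c - r \<notin> {lo<..<hi}"
  shows "affine_on {lo..hi} (\<lambda>y. max (y + r) c)"
proof (cases "c - r \<le> lo")
  case True
  then show ?thesis by (intro affine_on_cong[OF affine_on_shift]) auto
next
  case False
  with assms have "hi \<le> c - r" by auto
  then show ?thesis by (intro affine_on_cong[OF affine_on_const]) auto
qed

lemma convex_on_max0_affine: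
  assumes "affine_on S h" "convex S"
  shows "convex_on S (\<lambda>y. max 0 (h y))"
proof -
  obtain \<alpha> \<beta> where h: "\<forall>y\<in>S. h y = \<alpha> + \<beta> * y"
    using assms(1) unfolding affine_on_def by blast
  have "max 0 (h (u * x + v * y)) \<le> u * max 0 (h x) + v * max 0 (h y)"
    if "x \<in> S" "y \<in> S" "0 \<le> u" "0 \<le> v" "u + v = 1" for x y u v
  proof -
    have "u * x + v * y \<in> S" using assms(2) that by (simp add: convex_def)
    moreover have "u * (\<alpha> + \<beta> * x) + v * (\<alpha> + \<beta> * y) = (u + v) * \<alpha> + \<beta> * (u * x + v * y)"
      by algebra
    ultimately have "h (u * x + v * y) = u * h x + v * h y"
      using h that by simp
    moreover have "u * h x \<le> u * max 0 (h x)" "v * h y \<le> v * max 0 (h y)"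
      using that by (simp_all add: mult_left_mono)
    ultimately show ?thesis using that by simp
  qed
  then show ?thesis using assms(2) unfolding convex_on_def by simp
qed

lemma convex_on_sum_fun:
  assumes "convex S" "\<And>i. i \<in> I \<Longrightarrow> convex_on S (f i)"
  shows "convex_on S (\<lambda>y. \<Sum>i\<in>I. f i y)"
  using assms by (induction I rule: infinite_finite_induct) (auto simp: convex_on_const)

lemma finite_set_adjacent_points:
  fixes E :: "real set"
  assumes "finite E" "a \<in> E" "a < \<sigma>" "b \<in> E" "\<sigma> < b"
  obtains lo hi where "lo \<in> E" "hi \<in> E" "lo < \<sigma>" "\<sigma> < hi"
    "\<And>e. e \<in> E \<Longrightarrow> lo < e \<Longrightarrow> e < hi \<Longrightarrow> e = \<sigma>"
proof
  let ?L = "{e\<in>E. e < \<sigma>}" and ?H = "{e\<in>E. \<sigma> < e}"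
  have "finite ?L" "finite ?H" "?L \<noteq> {}" "?H \<noteq> {}" using assms by auto
  then show "Max ?L \<in> E" "Min ?H \<in> E" "Max ?L < \<sigma>" "\<sigma> < Min ?H"
    using Max_in[of ?L] Min_in[of ?H] by auto
  show "e = \<sigma>" if "e \<in> E" "Max ?L < e" "e < Min ?H" for e
    using that \<open>finite ?L\<close> \<open>finite ?H\<close> Max_ge[of ?L e] Min_le[of ?H e] by fastforce
qed

definition critical_slacks :: "('v \<Rightarrow> 'v \<Rightarrow> real) \<Rightarrow> ('v \<Rightarrow> (real \<times> real) set) \<Rightarrow> 'v list \<Rightarrow> real set" where
  "critical_slacks len Iv p =
     (\<Union>a\<in>{0..length p - 1}. \<Union>b\<in>{0..length p - 1}.
        if a < b then (\<lambda>\<tau>. \<tau> - lplus len p a) ` Cab len Iv p a b else {})"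

definition slack :: "('v \<Rightarrow> 'v \<Rightarrow> real) \<Rightarrow> 'v list \<Rightarrow> (nat \<Rightarrow> real) \<Rightarrow> nat \<Rightarrow> real" where
  "slack len p t j = t j - lplus len p j"

lemma critical_times_eq:
  "critical_times len Iv p i = (\<lambda>\<sigma>. \<sigma> + lplus len p i) ` critical_slacks len Iv p"
  unfolding critical_times_def critical_slacks_def lplus2_def image_UN
  by (intro SUP_cong refl) (auto simp: image_image)

lemma mem_critical_times_iff:
  "t i \<in> critical_times len Iv p i \<longleftrightarrow> slack len p t i \<in> critical_slacks len Iv p"
  unfolding critical_times_eq slack_def by force

lemma mem_critical_slacksI:
  assumes "a < b" "b < length p" "\<tau> \<in> Cab len Iv p a b"
  shows "\<tau> - lplus len p a \<in> critical_slacks len Iv p"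
  unfolding critical_slacks_def using assms by (intro UN_I[of a] UN_I[of b]) auto

lemma lminus_Suc: "Suc m < length p \<Longrightarrow> lminus len p (Suc m) = lplus len p m"
  unfolding lminus_def lplus_def lpos_def eleft_def eright_def by simp

lemma zero_mem_critical_slacks:
  assumes "length p \<ge> 2"
  shows "0 \<in> critical_slacks len Iv p"
proof -
  have "lplus len p 0 \<in> Cab len Iv p 0 1"
    unfolding Cab_def Jset_def Let_def by auto
  from mem_critical_slacksI[OF _ _ this] assms show ?thesis by simp
qed

lemma total_slack_mem_critical_slacks:
  assumes "length p \<ge> 2"
  shows "1 - lplus len p (length p - 1) \<in> critical_slacks len Iv p"
proof -
  let ?k = "length p - 1"
  let ?ts = "1 - lplus2 len p (?k - 1) ?k"
  have "?ts - (lminus len p ?k - lplus len p 0) \<in> Cab len Iv p 0 ?k"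
    unfolding Cab_def Jset_def Let_def by (intro UnI2 CollectI exI[of _ ?ts] conjI) auto
  from mem_critical_slacksI[OF _ _ this] assms
  have "?ts - (lminus len p ?k - lplus len p 0) - lplus len p 0 \<in> critical_slacks len Iv p"
    by simp
  moreover have "lminus len p ?k = lplus len p (?k - 1)"
    using lminus_Suc[of "?k - 1" p len] assms by (simp add: Suc_diff_Suc numeral_2_eq_2)
  ultimately show ?thesis by (simp add: lplus2_def)
qed

lemma interval_end_mem_critical_slacks:
  assumes "Suc m < length p" "(ts, te) \<in> Iv (p ! m)"
  shows "te - lplus len p m \<in> critical_slacks len Iv p"
proof -
  have "te \<in> Cab len Iv p m (Suc m)"
    unfolding Cab_def Jset_def Let_def using assms by auto
  from mem_critical_slacksI[OF _ _ this] assms show ?thesis by simp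
qed

lemma interval_start_mem_critical_slacks:
  assumes "Suc m < length p" "(ts, te) \<in> Iv (p ! Suc m)"
  shows "ts - lplus len p m \<in> critical_slacks len Iv p"
proof -
  have "ts - (lminus len p (Suc m) - lplus len p m) \<in> Cab len Iv p m (Suc m)"
    unfolding Cab_def Jset_def Let_def using assms by blast
  from mem_critical_slacksI[OF _ _ this] assms show ?thesis by (simp add: lminus_Suc)
qed

lemma finite_critical_slacks:
  assumes "\<And>m. m < length p \<Longrightarrow> finite (Iv (p ! m))"
  shows "finite (critical_slacks len Iv p)"
proof -
  have "finite (Jset len Iv p m)" if "m < length p" for m
    unfolding Jset_def Let_def using assms that by auto
  moreover have "Cab len Iv p a b = snd ` Jset len Iv p a
      \<union> (\<lambda>I. fst I - (lminus len p b - lplus len p a)) ` Jset len Iv p b" for a b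
    unfolding Cab_def by force
  ultimately have "finite (Cab len Iv p a b)" if "a < length p" "b < length p" for a b
    using that by simp
  then show ?thesis unfolding critical_slacks_def by auto
qed

lemma timing_profile_iff_slack:
  "timing_profile len p t \<longleftrightarrow>
     0 \<le> slack len p t 0 \<and>
     (\<forall>j. Suc j < length p - 1 \<longrightarrow> slack len p t j \<le> slack len p t (Suc j)) \<and>
     slack len p t (length p - 2) \<le> 1 - lplus len p (length p - 1)"
proof -
  have "Suc j \<le> length p - 1 - 1 \<longleftrightarrow> Suc j < length p - 1" for j by arith
  moreover have "(a + (c - d) \<le> b) \<longleftrightarrow> (a - d \<le> b - c)" for a b c d :: real by linarith
  ultimately show ?thesis
    unfolding timing_profile_def lplus2_def slack_def Let_def Suc_eq_plus1[symmetric]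
    by (simp add: numeral_2_eq_2)
qed

lemma mono_on_slack:
  assumes "timing_profile len p t"
  shows "mono_on {..<length p - 1} (slack len p t)"
proof (rule mono_onI)
  fix j j' assume "j \<in> {..<length p - 1}" "j' \<in> {..<length p - 1}" "j \<le> j'"
  from \<open>j \<le> j'\<close> \<open>j' \<in> {..<length p - 1}\<close> show "slack len p t j \<le> slack len p t j'"
  proof (induction j' rule: dec_induct)
    case (step n)
    then have "slack len p t n \<le> slack len p t (Suc n)"
      using assms unfolding timing_profile_iff_slack by simp
    with step show ?case by simp
  qed simp
qed

lemma slack_bounds:
  assumes "timing_profile len p t" "j < length p - 1"
  shows "0 \<le> slack len p t j" "slack len p t j \<le> 1 - lplus len p (length p - 1)"
proof -
  have "slack len p t 0 \<le> slack len p t j" "slack len p t j \<le> slack len p t (length p - 2)"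
    using mono_onD[OF mono_on_slack[OF assms(1)]] assms(2) by simp_all
  then show "0 \<le> slack len p t j" "slack len p t j \<le> 1 - lplus len p (length p - 1)"
    using assms(1) unfolding timing_profile_iff_slack by linarith+
qed

lemma reward_eq_sum_overlaps:
  "reward Iv p t = (\<Sum>m\<in>{0..length p - 1}. \<Sum>I\<in>Iv (p ! m).
     max 0 (min (if m = length p - 1 then 1 else t m) (snd I)
          - max (if m = 0 then 0 else t (m - 1)) (fst I)))"
  unfolding reward_def Rv_def overlap_def Let_def by simp

definition move_slack_class ::
  "('v \<Rightarrow> 'v \<Rightarrow> real) \<Rightarrow> 'v list \<Rightarrow> (nat \<Rightarrow> real) \<Rightarrow> real \<Rightarrow> real \<Rightarrow> nat \<Rightarrow> real" where
  "move_slack_class len p t \<sigma> y j =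
     (if j < length p - 1 \<and> slack len p t j = \<sigma> then y + lplus len p j else t j)"

lemma slack_move_slack_class:
  "slack len p (move_slack_class len p t \<sigma> y) j =
     (if j < length p - 1 \<and> slack len p t j = \<sigma> then y else slack len p t j)"
  unfolding move_slack_class_def slack_def by simp

lemma move_slack_class_self: "move_slack_class len p t \<sigma> \<sigma> = t"
  unfolding move_slack_class_def slack_def by auto

lemma timing_profile_move_slack_class:
  assumes "timing_profile len p t" "\<sigma> \<in> {lo<..<hi}" "y \<in> {lo..hi}"
    and "0 \<le> lo" "hi \<le> 1 - lplus len p (length p - 1)"
    and "\<And>j. j < length p - 1 \<Longrightarrow> slack len p t j \<notin> {lo<..<hi} - {\<sigma>}"
  shows "timing_profile len p (move_slack_class len p t \<sigma> y)"
proof -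
  let ?s = "slack len p t" and ?k = "length p - 1"
  have outside: "?s j \<le> lo \<or> hi \<le> ?s j" if "j < ?k" "?s j \<noteq> \<sigma>" for j
    using assms(6)[OF that(1)] that(2) by auto
  have step: "?s j \<le> ?s (Suc j)" if "Suc j < ?k" for j
    using assms(1) that unfolding timing_profile_iff_slack by simp
  show ?thesis
    unfolding timing_profile_iff_slack slack_move_slack_class
  proof (intro conjI allI impI)
    show "0 \<le> (if 0 < ?k \<and> ?s 0 = \<sigma> then y else ?s 0)"
      using assms(1,3,4) unfolding timing_profile_iff_slack by auto
  next
    fix j assume j: "Suc j < ?k"
    show "(if j < ?k \<and> ?s j = \<sigma> then y else ?s j)
        \<le> (if Suc j < ?k \<and> ?s (Suc j) = \<sigma> then y else ?s (Suc j))"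
      using outside[of j] outside[of "Suc j"] step[OF j] j assms(2,3) by auto
  next
    show "(if length p - 2 < ?k \<and> ?s (length p - 2) = \<sigma> then y else ?s (length p - 2))
        \<le> 1 - lplus len p ?k"
      using assms(1,3,5) unfolding timing_profile_iff_slack by auto
  qed
qed

lemma convex_on_reward_move_slack_class:
  assumes gap: "{lo<..<hi} \<inter> critical_slacks len Iv p = {}"
  shows "convex_on {lo..hi} (\<lambda>y. reward Iv p (move_slack_class len p t \<sigma> y))"
proof -
  let ?k = "length p - 1" and ?t = "move_slack_class len p t \<sigma>"
  have no_kink: "c - r \<notin> {lo<..<hi}" if "c - r \<in> critical_slacks len Iv p" for c r
    using gap that by blast
  have right_end: "affine_on {lo..hi} (\<lambda>y. min (if m = ?k then 1 else ?t y m) te)"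
    if "m \<le> ?k" "(ts, te) \<in> Iv (p ! m)" for m ts te
  proof (cases "m < ?k \<and> slack len p t m = \<sigma>")
    case True
    have "affine_on {lo..hi} (\<lambda>y. min (y + lplus len p m) te)"
      using True that by (intro affine_on_min_shift no_kink interval_end_mem_critical_slacks) auto
    then show ?thesis
      using True by (simp add: move_slack_class_def)
  next
    case False
    then show ?thesis
      using that(1)
      by (intro affine_on_cong[OF affine_on_const[of _ "min (if m = ?k then 1 else t m) te"]])
        (auto simp: move_slack_class_def)
  qed
  have left_end: "affine_on {lo..hi} (\<lambda>y. max (if m = 0 then 0 else ?t y (m - 1)) ts)"
    if "m \<le> ?k" "(ts, te) \<in> Iv (p ! m)" for m ts te
  proof (cases "0 < m \<and> slack len p t (m - 1) = \<sigma>")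
    case True
    then have "affine_on {lo..hi} (\<lambda>y. max (y + lplus len p (m - 1)) ts)"
      using that by (intro affine_on_max_shift no_kink interval_start_mem_critical_slacks) auto
    moreover have "m - 1 < ?k"
      using True that(1) by linarith
    ultimately show ?thesis
      using True by (simp add: move_slack_class_def)
  next
    case False
    then show ?thesis
      by (intro affine_on_cong[OF affine_on_const[of _ "max (if m = 0 then 0 else t (m - 1)) ts"]])
        (auto simp: move_slack_class_def)
  qed
  show ?thesis
    unfolding reward_eq_sum_overlaps
    using right_end left_end
    by (intro convex_on_sum_fun convex_on_max0_affine affine_on_diff) auto
qed

definition noncritical_slacks ::
  "('v \<Rightarrow> 'v \<Rightarrow> real) \<Rightarrow> ('v \<Rightarrow> (real \<times> real) set) \<Rightarrow> 'v list \<Rightarrow> (nat \<Rightarrow> real) \<Rightarrow> real set" where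
  "noncritical_slacks len Iv p t = slack len p t ` {..<length p - 1} - critical_slacks len Iv p"

lemma noncritical_slacks_move_slack_class:
  assumes "y \<in> critical_slacks len Iv p \<union> slack len p t ` {..<length p - 1}" "y \<noteq> \<sigma>"
  shows "noncritical_slacks len Iv p (move_slack_class len p t \<sigma> y)
           \<subseteq> noncritical_slacks len Iv p t - {\<sigma>}"
  using assms unfolding noncritical_slacks_def slack_move_slack_class by auto

lemma timing_profile_restrict:
  assumes "length p \<ge> 2"
  shows "timing_profile len p (restrict t {..<length p - 1}) \<longleftrightarrow> timing_profile len p t"
  unfolding timing_profile_def Let_def using assms by (auto simp: restrict_def)

lemma reward_restrict: "reward Iv p (restrict t {..<length p - 1}) = reward Iv p t"
  unfolding reward_eq_sum_overlaps by (intro sum.cong refl) (auto simp: restrict_def)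

context
  fixes len :: "'v \<Rightarrow> 'v \<Rightarrow> real" and Iv :: "'v \<Rightarrow> (real \<times> real) set" and p :: "'v list"
  assumes len_p: "length p \<ge> 2"
    and finite_intervals: "\<And>m. m < length p \<Longrightarrow> finite (Iv (p ! m))"
begin

lemma noncritical_slack_bounds:
  assumes t: "timing_profile len p t" and \<sigma>: "\<sigma> \<in> noncritical_slacks len Iv p t"
  shows "0 < \<sigma>" "\<sigma> < 1 - lplus len p (length p - 1)"
proof -
  obtain i where "i < length p - 1" "\<sigma> = slack len p t i" "\<sigma> \<notin> critical_slacks len Iv p"
    using \<sigma> unfolding noncritical_slacks_def by blast
  then show "0 < \<sigma>" "\<sigma> < 1 - lplus len p (length p - 1)"
    using slack_bounds[OF t] zero_mem_critical_slacks[OF len_p]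
      total_slack_mem_critical_slacks[OF len_p]
    by (metis order_le_less)+
qed

lemma improve_noncritical_slack:
  assumes t: "timing_profile len p t" and \<sigma>: "\<sigma> \<in> noncritical_slacks len Iv p t"
  obtains t' where "timing_profile len p t'" "reward Iv p t \<le> reward Iv p t'"
    "noncritical_slacks len Iv p t' \<subset> noncritical_slacks len Iv p t"
proof -
  let ?k = "length p - 1" and ?crit = "critical_slacks len Iv p"
  let ?U = "1 - lplus len p ?k" and ?t = "move_slack_class len p t \<sigma>"
  define E where "E = ?crit \<union> slack len p t ` {..<?k}"
  have "\<sigma> \<notin> ?crit" "0 < \<sigma>" "\<sigma> < ?U"
    using noncritical_slack_bounds[OF t \<sigma>] \<sigma> unfolding noncritical_slacks_def by auto
  moreover have "finite E" "0 \<in> E" "?U \<in> E"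
    unfolding E_def using finite_critical_slacks[of p Iv, OF finite_intervals]
      zero_mem_critical_slacks[OF len_p] total_slack_mem_critical_slacks[OF len_p]
    by auto
  ultimately obtain lo hi where lohi: "lo \<in> E" "hi \<in> E" "lo < \<sigma>" "\<sigma> < hi"
    and adjacent: "\<And>e. e \<in> E \<Longrightarrow> lo < e \<Longrightarrow> e < hi \<Longrightarrow> e = \<sigma>"
    using finite_set_adjacent_points by metis
  have "0 \<le> lo" "hi \<le> ?U"
    using adjacent[OF \<open>0 \<in> E\<close>] adjacent[OF \<open>?U \<in> E\<close>] lohi \<open>0 < \<sigma>\<close> \<open>\<sigma> < ?U\<close> by force+
  have gap: "{lo<..<hi} \<inter> ?crit = {}"
  proof (intro equals0I)
    fix e assume "e \<in> {lo<..<hi} \<inter> ?crit"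
    then have "e = \<sigma>" "e \<in> ?crit"
      using adjacent unfolding E_def by auto
    with \<open>\<sigma> \<notin> ?crit\<close> show False
      by simp
  qed
  have feasible: "timing_profile len p (?t y)" if "y \<in> {lo..hi}" for y
    using t lohi that \<open>0 \<le> lo\<close> \<open>hi \<le> ?U\<close> adjacent unfolding E_def
    by (intro timing_profile_move_slack_class) auto
  have "reward Iv p t = reward Iv p (?t \<sigma>)"
    by (simp add: move_slack_class_self)
  also have "\<dots> \<le> max (reward Iv p (?t lo)) (reward Iv p (?t hi))"
    using convex_on_reward_move_slack_class[OF gap] lohi by (intro convex_on_le_max) auto
  finally obtain y where y: "y \<in> {lo, hi}" "reward Iv p t \<le> reward Iv p (?t y)"
    by (metis insertCI max_def)
  have "noncritical_slacks len Iv p (?t y) \<subseteq> noncritical_slacks len Iv p t - {\<sigma>}"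
    using y lohi unfolding E_def by (intro noncritical_slacks_move_slack_class) auto
  with \<sigma> have "noncritical_slacks len Iv p (?t y) \<subset> noncritical_slacks len Iv p t"
    by blast
  moreover have "timing_profile len p (?t y)"
    using y lohi by (intro feasible) auto
  ultimately show ?thesis
    using y that by blast
qed

lemma critical_profile_ge:
  assumes "timing_profile len p t"
  shows "\<exists>t'. timing_profile len p t' \<and> reward Iv p t \<le> reward Iv p t' \<and>
    (\<forall>i < length p - 1. t' i \<in> critical_times len Iv p i)"
  using assms
proof (induction "card (noncritical_slacks len Iv p t)" arbitrary: t rule: less_induct)
  case less
  show ?case
  proof (cases "noncritical_slacks len Iv p t = {}")
    case True
    then have "\<forall>i < length p - 1. t i \<in> critical_times len Iv p i"
      unfolding noncritical_slacks_def mem_critical_times_iff by blast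
    with less.prems show ?thesis
      by blast
  next
    case False
    then obtain t' where t': "timing_profile len p t'" "reward Iv p t \<le> reward Iv p t'"
      "noncritical_slacks len Iv p t' \<subset> noncritical_slacks len Iv p t"
      using improve_noncritical_slack[OF less.prems] by blast
    have "card (noncritical_slacks len Iv p t') < card (noncritical_slacks len Iv p t)"
      using t'(3) by (intro psubset_card_mono) (simp add: noncritical_slacks_def)
    with less.hyps t'(1,2) show ?thesis
      by (meson order_trans)
  qed
qed

lemma optimal_critical_profile_exists:
  assumes "\<exists>t. timing_profile len p t"
  shows "\<exists>t. optimal_profile len Iv p t \<and> (\<forall>i < length p - 1. t i \<in> critical_times len Iv p i)"
proof -
  let ?k = "length p - 1" and ?C = "critical_times len Iv p"
  \<comment> \<open>Profiles are arbitrary beyond position k - 1; restricting them there makes the set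
    of critical profiles finite.\<close>
  define S where "S = {t \<in> PiE {..<?k} ?C. timing_profile len p t}"
  have "finite (?C i)" for i
    unfolding critical_times_eq using finite_critical_slacks[of p Iv, OF finite_intervals] by simp
  then have "finite S"
    unfolding S_def by (auto intro: finite_subset[OF _ finite_PiE])
  have dominated: "\<exists>t'\<in>S. reward Iv p t \<le> reward Iv p t'" if t: "timing_profile len p t" for t
  proof -
    obtain t' where t': "timing_profile len p t'" "reward Iv p t \<le> reward Iv p t'"
      "\<forall>i < ?k. t' i \<in> ?C i"
      using critical_profile_ge[OF t] by blast
    then have "restrict t' {..<?k} \<in> S"
      unfolding S_def using timing_profile_restrict[OF len_p] by auto
    with t'(2) show ?thesis
      using reward_restrict by metis
  qed
  with assms have "S \<noteq> {}"
    by blast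
  then have "Max (reward Iv p ` S) \<in> reward Iv p ` S"
    using \<open>finite S\<close> by (intro Max_in) auto
  then obtain t where "t \<in> S" "reward Iv p t = Max (reward Iv p ` S)"
    by auto
  then have maximal: "reward Iv p t' \<le> reward Iv p t" if "t' \<in> S" for t'
    using \<open>finite S\<close> that by simp
  have "optimal_profile len Iv p t"
    unfolding optimal_profile_def
  proof (intro conjI allI impI)
    show "timing_profile len p t"
      using \<open>t \<in> S\<close> unfolding S_def by simp
  next
    fix t' assume "timing_profile len p t'"
    then obtain t'' where "t'' \<in> S" "reward Iv p t' \<le> reward Iv p t''"
      using dominated by blast
    then show "reward Iv p t' \<le> reward Iv p t"
      using maximal order_trans by blast
  qed
  with \<open>t \<in> S\<close> show ?thesis
    unfolding S_def by auto
qed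

end

theorem theorem1:
  fixes V :: "'v set" and E :: "('v \<times> 'v) set" and len :: "'v \<Rightarrow> 'v \<Rightarrow> real"
    and Iv :: "'v \<Rightarrow> (real \<times> real) set" and p :: "'v list"
  assumes "task_assistance_graph V E len Iv"
    and "is_path V E p"
    and "length p \<ge> 2"
    and "\<exists>t. timing_profile len p t"
  shows "\<exists>t. optimal_profile len Iv p t \<and>
           (\<forall>i < length p - 1. t i \<in> critical_times len Iv p i)"
proof (rule optimal_critical_profile_exists)
  fix m assume "m < length p"
  then have "p ! m \<in> V"
    using assms(2) unfolding is_path_def by (auto dest: nth_mem)
  then show "finite (Iv (p ! m))"
    using assms(1) unfolding task_assistance_graph_def by blast
qed (use assms in auto)

end
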